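(* Let $l$, $m$, $n$ be positive integers such that $1<l<m\le n$. Then \[ \sum_{d=1}^n \mu(d)\, 2^{\lfloor\frac{n}{d} \rfloor - \lfloor \frac{n-1}{d} \rfloor + \lfloor\frac{m}{d} \rfloor - \lfloor \frac{m-1}{d} \rfloor + \lfloor\frac{l}{d} \rfloor - \lfloor \frac{l-1}{d} \rfloor} \] equals \[ \begin{cases} 4+ M(n) & \text{if } \gcd(l,m)=\gcd(l,n)=\gcd(m,n) =1, \\ 3+ M(n) & \text{if exactly two of the pairs } \{l,m\},\{l,n\},\{m,n\} \text{ are co-prime},\\ 2+ M(n) & \text{if exactly one of these pairs is co-prime},\\ 1 + M(n) & \text{if none of these pairs is co-prime and } \gcd(l,m,n)=1, \\ M(n) & \text{otherwise.} \end{cases} \]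
   Context: $\mu$ is the Möbius function and $M(n)=\sum_{d=1}^n\mu(d)$ is the Mertens function. $\lfloor x\rfloor$ is the floor of $x$. *)

theory Defs
  imports "HOL-Computational_Algebra.Computational_Algebra"
begin

definition moebius :: "nat \<Rightarrow> int" where
  "moebius d = (if squarefree d then (-1) ^ card (prime_factors d) else 0)"

definition mertens :: "nat \<Rightarrow> int" where
  "mertens n = (\<Sum>d = 1..n. moebius d)"

end

theory Submission
  imports Defs
begin

text \<open>Since \<open>\<lfloor>k/d\<rfloor> - \<lfloor>(k-1)/d\<rfloor> = [d | k]\<close>, the summand is \<open>\<mu>(d)\<close> times
  \<open>(1 + [d | n])(1 + [d | m])(1 + [d | l])\<close>, i.e. times \<open>1\<close> plus the seven indicators \<open>[d | g]\<close>
  with \<open>g\<close> running over the gcds of the nonempty subsets of \<open>{l, m, n}\<close>. The constant term sums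
  to \<open>M(n)\<close>, and \<open>\<Sum>\<^sub>d\<^sub>|\<^sub>g \<mu>(d) = [g = 1]\<close> turns each indicator into \<open>[g = 1]\<close>. As
  \<open>l, m, n > 1\<close>, what remains counts the coprime pairs plus \<open>[gcd(l, m, n) = 1]\<close>, and any
  coprime pair forces the latter.\<close>

lemma prime_factors_prod_primes:
  fixes S :: "nat set"
  assumes "finite S" "\<And>p. p \<in> S \<Longrightarrow> prime p"
  shows "prime_factors (\<Prod>S) = S"
proof -
  have "prime_factorization (\<Prod>S) = mset_set S"
    using assms prime_factorization_prod_mset_primes[of "mset_set S"]
    by (simp add: prod_unfold_prod_mset)
  then show ?thesis using assms(1) by simp
qed

lemma squarefree_prod_primes:
  fixes S :: "nat set"
  assumes "\<And>p. p \<in> S \<Longrightarrow> prime p"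
  shows "squarefree (\<Prod>S)"
  using assms by (intro squarefree_prod_coprime[where f = id, simplified])
    (auto intro: primes_coprime squarefree_prime)

lemma prod_prime_factors_squarefree:
  fixes d :: nat
  assumes "squarefree d"
  shows "\<Prod>(prime_factors d) = d"
proof -
  have "d \<noteq> 0" using assms by (metis not_squarefree_0)
  have "multiplicity p d = 1" if "p \<in> prime_factors d" for p
  proof -
    have "prime p" "multiplicity p d > 0"
      using that \<open>d \<noteq> 0\<close> by (simp_all add: prime_factors_multiplicity)
    moreover have "multiplicity p d \<le> 1"
      using assms \<open>d \<noteq> 0\<close> \<open>prime p\<close> squarefree_factorial_semiring'' by blast
    ultimately show ?thesis by simp
  qed
  then have "\<Prod>(prime_factors d) = (\<Prod>p \<in> prime_factors d. p ^ multiplicity p d)"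
    by (intro prod.cong) auto
  also have "\<dots> = d" using \<open>d \<noteq> 0\<close> by (simp add: prod_prime_factors)
  finally show ?thesis .
qed

lemma sum_Pow_minus_one_power:
  assumes "finite A" "A \<noteq> {}"
  shows "(\<Sum>X\<in>Pow A. (-1) ^ card X) = (0 :: 'a :: comm_ring_1)"
proof -
  \<comment> \<open>expand \<open>\<Prod>\<^sub>x\<^sub>\<in>\<^sub>A (1 - 1) = 0\<close>\<close>
  have "card A \<noteq> 0" using assms by simp
  then show ?thesis
    using prod_diff_conv_sum[OF assms(1), of "\<lambda>_. 1" "\<lambda>_. 1"] by (simp add: zero_power)
qed

lemma sum_moebius_divisors:
  assumes "k > 0"
  shows "(\<Sum>d | d dvd k. moebius d) = of_bool (k = 1)"
proof -
  have "(\<Sum>d | d dvd k. moebius d) = (\<Sum>d | d dvd k \<and> squarefree d. moebius d)"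
    using assms by (intro sum.mono_neutral_right) (auto simp: moebius_def)
  also have "\<dots> = (\<Sum>S\<in>Pow (prime_factors k). (-1) ^ card S)"
  proof (rule sum.reindex_bij_witness[where j = prime_factors and i = Prod])
    fix d assume "d \<in> {d. d dvd k \<and> squarefree d}"
    then have "d dvd k" "squarefree d" by simp_all
    then show "\<Prod>(prime_factors d) = d" "prime_factors d \<in> Pow (prime_factors k)"
      "(-1) ^ card (prime_factors d) = moebius d"
      using assms by (auto simp: prod_prime_factors_squarefree moebius_def
        in_prime_factors_iff intro: dvd_trans)
  next
    fix S assume "S \<in> Pow (prime_factors k)"
    then have S: "finite S" "S \<subseteq> prime_factors k" "\<And>p. p \<in> S \<Longrightarrow> prime p"
      by (auto intro: finite_subset)
    show "prime_factors (\<Prod>S) = S" using S by (simp add: prime_factors_prod_primes)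
    have "\<Prod>S dvd \<Prod>(prime_factors k)"
      using S by (intro prod_dvd_prod_subset) auto
    also have "\<dots> dvd (\<Prod>p \<in> prime_factors k. p ^ multiplicity p k)"
      using assms by (intro prod_dvd_prod)
        (simp add: prime_factors_multiplicity dvd_power del: in_prime_factors_iff)
    also have "\<dots> = k" using assms by (simp add: prod_prime_factors)
    finally show "\<Prod>S \<in> {d. d dvd k \<and> squarefree d}"
      using S by (simp add: squarefree_prod_primes)
  qed
  also have "\<dots> = of_bool (k = 1)"
  proof (cases "k = 1")
    case False
    then obtain p where "prime p" "p dvd k" using prime_factor_nat by blast
    then have "p \<in> prime_factors k" using assms by (simp add: in_prime_factors_iff)
    then have "prime_factors k \<noteq> {}" by blast
    then show ?thesis using False by (simp add: sum_Pow_minus_one_power)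
  qed simp
  finally show ?thesis .
qed

lemma sum_moebius_dvd_upto:
  assumes "0 < a" "a \<le> n"
  shows "(\<Sum>d = 1..n. moebius d * of_bool (d dvd a)) = of_bool (a = 1)"
proof -
  have "{d \<in> {1..n}. d dvd a} = {d. d dvd a}"
    using assms by (auto dest: dvd_imp_le intro: Suc_leI simp: dvd_pos_nat)
  then show ?thesis
    using sum_moebius_divisors[OF assms(1)]
    by (simp add: sum.inter_filter[symmetric] of_bool_def if_distrib cong: if_cong)
qed

lemma floor_diff_eq_of_bool_dvd:
  assumes "k > 0"
  shows "\<lfloor>real k / real d\<rfloor> - \<lfloor>real (k - 1) / real d\<rfloor> = of_bool (d dvd k)"
proof -
  have "\<lfloor>real k / real d\<rfloor> = int (k div d)" "\<lfloor>real (k - 1) / real d\<rfloor> = int ((k - 1) div d)"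
    by (rule floor_divide_of_nat_eq)+
  moreover obtain j where "k = Suc j" using assms by (cases k) auto
  ultimately show ?thesis by (auto simp: div_Suc mod_eq_0_iff_dvd)
qed

lemma power_two_of_bool_sum:
  "(2 :: 'a :: comm_semiring_1) ^ (of_bool P + of_bool Q + of_bool R) =
     1 + of_bool P + of_bool Q + of_bool R + of_bool (P \<and> Q) + of_bool (P \<and> R)
       + of_bool (Q \<and> R) + of_bool (P \<and> Q \<and> R)"
  by (cases P; cases Q; cases R) (simp_all add: numeral_3_eq_3)

lemma sum_moebius_power_two_dvd:
  fixes a b c n :: nat
  assumes "0 < a" "0 < b" "0 < c" "a \<le> n" "b \<le> n" "c \<le> n"
  shows "(\<Sum>d = 1..n. moebius d * 2 ^ (of_bool (d dvd a) + of_bool (d dvd b) + of_bool (d dvd c))) =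
    mertens n + of_bool (a = 1) + of_bool (b = 1) + of_bool (c = 1)
      + of_bool (coprime a b) + of_bool (coprime a c) + of_bool (coprime b c)
      + of_bool (gcd a (gcd b c) = 1)"
proof -
  define D where "D x = (\<Sum>d = 1..n. moebius d * of_bool (d dvd x))" for x
  have D: "D x = of_bool (x = 1)" if "0 < x" "x \<le> n" for x
    unfolding D_def using that by (rule sum_moebius_dvd_upto)
  have "(\<Sum>d = 1..n. moebius d * 2 ^ (of_bool (d dvd a) + of_bool (d dvd b) + of_bool (d dvd c))) =
      (\<Sum>d = 1..n. moebius d + moebius d * of_bool (d dvd a) + moebius d * of_bool (d dvd b)
        + moebius d * of_bool (d dvd c) + moebius d * of_bool (d dvd gcd a b)
        + moebius d * of_bool (d dvd gcd a c) + moebius d * of_bool (d dvd gcd b c)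
        + moebius d * of_bool (d dvd gcd a (gcd b c)))"
    by (intro sum.cong refl) (simp add: power_two_of_bool_sum algebra_simps)
  also have "\<dots> = mertens n + D a + D b + D c + D (gcd a b) + D (gcd a c) + D (gcd b c)
      + D (gcd a (gcd b c))"
    unfolding D_def mertens_def by (simp only: sum.distrib)
  also have "\<dots> = mertens n + of_bool (a = 1) + of_bool (b = 1) + of_bool (c = 1)
      + of_bool (coprime a b) + of_bool (coprime a c) + of_bool (coprime b c)
      + of_bool (gcd a (gcd b c) = 1)"
    using assms by (simp add: D coprime_iff_gcd_eq_1 gcd_le1_nat gcd_le2_nat le_trans[OF gcd_le1_nat])
  finally show ?thesis .
qed

theorem theorem4p2:
  fixes l m n :: nat
  assumes "1 < l" and "l < m" and "m \<le> n"
  defines "e \<equiv> \<lambda>k d::nat. nat (\<lfloor>real k / real d\<rfloor> - \<lfloor>real (k - 1) / real d\<rfloor>)"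
  defines "c \<equiv> (of_bool (coprime l m) + of_bool (coprime l n) + of_bool (coprime m n) :: nat)"
  shows "(\<Sum>d = 1..n. moebius d * 2 ^ (e n d + e m d + e l d)) =
    (if c = 3 then 4 + mertens n
     else if c = 2 then 3 + mertens n
     else if c = 1 then 2 + mertens n
     else if gcd l (gcd m n) = 1 then 1 + mertens n
     else mertens n)"
proof -
  have e: "e k = (\<lambda>d. of_bool (d dvd k))" if "k > 0" for k
    unfolding e_def floor_diff_eq_of_bool_dvd[OF that] by simp
  have "(\<Sum>d = 1..n. moebius d * 2 ^ (e n d + e m d + e l d)) =
      mertens n + of_bool (coprime l m) + of_bool (coprime l n) + of_bool (coprime m n)
        + of_bool (gcd l (gcd m n) = 1)"
    using sum_moebius_power_two_dvd[of n m l n] assms(1-3)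
    by (simp add: e ac_simps gcd.left_commute)
  moreover have "gcd l (gcd m n) = 1" if "coprime l m \<or> coprime l n \<or> coprime m n"
    using that
    by (metis coprime_iff_gcd_eq_1 gcd.assoc gcd.left_commute gcd.commute gcd.bottom_left_bottom)
  ultimately show ?thesis
    unfolding c_def by (cases "coprime l m"; cases "coprime l n"; cases "coprime m n") simp_all
qed

end
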